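(* Let $L$ be an $n\times n$ real matrix (not necessarily symmetric) with nonpositive off-diagonal entries, and let $E$ be the set of unordered pairs $\{i,j\}$, $i\ne j$, with $L_{ij}+L_{ji}<0$; assume the graph $G=(\{1,\dots,n\},E)$ is connected and that nodes $1,\dots,n_l$ ($1\le n_l<n$) are labeled with values $f(1),\dots,f(n_l)$. Consider the Harmonic Functions prediction: the minimizer $\vec f\in\mathbb R^n$ of $\sum_{i\neq j}-L_{ij}(f_i-f_j)^2$ subject to $f_i=f(i)$ for $i\le n_l$. Set edge costs $d_{ij}=-2/(L_{ij}+L_{ji})$ for $\{i,j\}\in E$. Then for every unlabeled node $p$, the flow-based prediction with $\lambda=0$ and these costs equals the Harmonic Functions value $f_p$.
   Context: Flow-based prediction: orient each edge of $G$ arbitrarily; let $A$ be the $n\times |E|$ signed incidence matrix ($A_{ie}=+1$, $A_{je}=-1$ for $e$ oriented from $i$ to $j$), $A_l$ its rows $1,\dots,n_l$ and $A_u$ its remaining rows. For unlabeled $p$, $\vec b_p\in\mathbb R^{n-n_l}$ is zero except $-1$ at the entry of $p$. For $\lambda\ge0$, $\vec x$ is the unique minimizer of $\frac12\sum_{e} d_e(x_e^2+\lambda|x_e|)$ subject to $A_u\vec x=\vec b_p$, the weights are $\vec w(p)=A_l\vec x$, and the prediction is $f(p)=\sum_{i=1}^{n_l}w_i(p)f(i)$. *)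

theory Defs
  imports Complex_Main
begin

text \<open>Nodes are 0,...,n-1 (paper: 1,...,n); labeled nodes are 0,...,nl-1.
  Matrices are functions nat => nat => real, vectors nat => real.\<close>

definition graph_edges :: "(nat \<Rightarrow> nat \<Rightarrow> real) \<Rightarrow> nat \<Rightarrow> (nat \<times> nat) set" where
  "graph_edges L n = {(i, j). i < j \<and> j < n \<and> L i j + L j i < 0}"

text \<open>Each unordered edge {i,j} with i<j is oriented from i to j.\<close>

definition graph_adj :: "(nat \<Rightarrow> nat \<Rightarrow> real) \<Rightarrow> nat \<Rightarrow> nat \<Rightarrow> nat \<Rightarrow> bool" where
  "graph_adj L n a b \<longleftrightarrow> (a, b) \<in> graph_edges L n \<or> (b, a) \<in> graph_edges L n"

definition graph_connected :: "(nat \<Rightarrow> nat \<Rightarrow> real) \<Rightarrow> nat \<Rightarrow> bool" where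
  "graph_connected L n \<longleftrightarrow> (\<forall>i j. i < n \<and> j < n \<longrightarrow> (graph_adj L n)\<^sup>*\<^sup>* i j)"

definition harm_obj :: "(nat \<Rightarrow> nat \<Rightarrow> real) \<Rightarrow> nat \<Rightarrow> (nat \<Rightarrow> real) \<Rightarrow> real" where
  "harm_obj L n f = (\<Sum>i<n. \<Sum>j<n. if i \<noteq> j then - L i j * (f i - f j)^2 else 0)"

text \<open>Vectors in R^n: functions vanishing outside {0..<n}.\<close>
definition harm_feasible :: "nat \<Rightarrow> nat \<Rightarrow> (nat \<Rightarrow> real) \<Rightarrow> (nat \<Rightarrow> real) \<Rightarrow> bool" where
  "harm_feasible n nl fl f \<longleftrightarrow> (\<forall>i<nl. f i = fl i) \<and> (\<forall>i. n \<le> i \<longrightarrow> f i = 0)"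

definition is_harmonic_min ::
  "(nat \<Rightarrow> nat \<Rightarrow> real) \<Rightarrow> nat \<Rightarrow> nat \<Rightarrow> (nat \<Rightarrow> real) \<Rightarrow> (nat \<Rightarrow> real) \<Rightarrow> bool" where
  "is_harmonic_min L n nl fl f \<longleftrightarrow> harm_feasible n nl fl f \<and>
     (\<forall>g. harm_feasible n nl fl g \<longrightarrow> harm_obj L n f \<le> harm_obj L n g)"

definition harmonic_solution ::
  "(nat \<Rightarrow> nat \<Rightarrow> real) \<Rightarrow> nat \<Rightarrow> nat \<Rightarrow> (nat \<Rightarrow> real) \<Rightarrow> (nat \<Rightarrow> real)" where
  "harmonic_solution L n nl fl = (THE f. is_harmonic_min L n nl fl f)"

definition incidence :: "nat \<Rightarrow> nat \<times> nat \<Rightarrow> real" where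
  "incidence k e = (if k = fst e then 1 else if k = snd e then -1 else 0)"

definition flow_obj ::
  "(nat \<times> nat) set \<Rightarrow> (nat \<times> nat \<Rightarrow> real) \<Rightarrow> real \<Rightarrow> (nat \<times> nat \<Rightarrow> real) \<Rightarrow> real" where
  "flow_obj E d lam x = (1/2) * (\<Sum>e\<in>E. d e * ((x e)^2 + lam * \<bar>x e\<bar>))"

text \<open>Flow vectors in R^{|E|}: functions vanishing outside E; constraint A_u x = b_p.\<close>
definition flow_feasible ::
  "(nat \<times> nat) set \<Rightarrow> nat \<Rightarrow> nat \<Rightarrow> nat \<Rightarrow> (nat \<times> nat \<Rightarrow> real) \<Rightarrow> bool" where
  "flow_feasible E n nl p x \<longleftrightarrow>
     (\<forall>k. nl \<le> k \<and> k < n \<longrightarrow> (\<Sum>e\<in>E. incidence k e * x e) = (if k = p then -1 else 0)) \<and>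
     (\<forall>e. e \<notin> E \<longrightarrow> x e = 0)"

definition is_flow_min ::
  "(nat \<times> nat) set \<Rightarrow> (nat \<times> nat \<Rightarrow> real) \<Rightarrow> real \<Rightarrow> nat \<Rightarrow> nat \<Rightarrow> nat \<Rightarrow> (nat \<times> nat \<Rightarrow> real) \<Rightarrow> bool" where
  "is_flow_min E d lam n nl p x \<longleftrightarrow> flow_feasible E n nl p x \<and>
     (\<forall>y. flow_feasible E n nl p y \<longrightarrow> flow_obj E d lam x \<le> flow_obj E d lam y)"

definition flow_solution ::
  "(nat \<times> nat) set \<Rightarrow> (nat \<times> nat \<Rightarrow> real) \<Rightarrow> real \<Rightarrow> nat \<Rightarrow> nat \<Rightarrow> nat \<Rightarrow> (nat \<times> nat \<Rightarrow> real)" where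
  "flow_solution E d lam n nl p = (THE x. is_flow_min E d lam n nl p x)"

definition flow_weight ::
  "(nat \<times> nat) set \<Rightarrow> (nat \<times> nat \<Rightarrow> real) \<Rightarrow> real \<Rightarrow> nat \<Rightarrow> nat \<Rightarrow> nat \<Rightarrow> nat \<Rightarrow> real" where
  "flow_weight E d lam n nl p i = (\<Sum>e\<in>E. incidence i e * flow_solution E d lam n nl p e)"

definition flow_prediction ::
  "(nat \<times> nat) set \<Rightarrow> (nat \<times> nat \<Rightarrow> real) \<Rightarrow> real \<Rightarrow> nat \<Rightarrow> nat \<Rightarrow> (nat \<Rightarrow> real) \<Rightarrow> nat \<Rightarrow> real" where
  "flow_prediction E d lam n nl fl p = (\<Sum>i<nl. flow_weight E d lam n nl p i * fl i)"

definition edge_cost :: "(nat \<Rightarrow> nat \<Rightarrow> real) \<Rightarrow> nat \<times> nat \<Rightarrow> real" where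
  "edge_cost L e = -2 / (L (fst e) (snd e) + L (snd e) (fst e))"

end

theory Submission
  imports Defs "HOL-Library.Indicator_Function" "Jordan_Normal_Form.Determinant"
begin

text \<open>Let \<open>w\<^sub>e = -(L\<^sub>i\<^sub>j + L\<^sub>j\<^sub>i)\<close> and let \<open>\<Delta> = A W A\<^sup>T\<close> be the weighted graph Laplacian,
  so that the Harmonic Functions objective is the Dirichlet energy \<open>\<phi>\<^sup>T \<Delta> \<phi>\<close>. Its constrained
  minimiser is the unique \<open>u\<close> with the given labels and \<open>\<Delta>u = 0\<close> on unlabeled nodes. Since
  \<open>d\<^sub>e = 2/w\<^sub>e\<close>, the minimum cost flow is \<open>x = W A\<^sup>T \<mu>\<close> for the unique \<open>\<mu>\<close> vanishing on labeled
  nodes with \<open>\<Delta>\<mu> = -\<one>\<^sub>p\<close> on unlabeled nodes (the cross term with any circulation vanishes).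
  The weights are \<open>A\<^sub>l x = (\<Delta>\<mu>)\<^sub>l\<close>, and the symmetry \<open>u\<^sup>T \<Delta> \<mu> = \<mu>\<^sup>T \<Delta> u = 0\<close> gives
  \<open>\<Sum>\<^sub>i\<^sub><\<^sub>n\<^sub>l (\<Delta>\<mu>)\<^sub>i f(i) = u\<^sub>p\<close>. Uniqueness of both minimisers comes from connectivity: zero
  energy forces a potential to be constant.\<close>

definition edge_weight :: "(nat \<Rightarrow> nat \<Rightarrow> real) \<Rightarrow> nat \<times> nat \<Rightarrow> real" where
  "edge_weight L e = - (L (fst e) (snd e) + L (snd e) (fst e))"

definition net_flow :: "(nat \<times> nat) set \<Rightarrow> (nat \<times> nat \<Rightarrow> real) \<Rightarrow> nat \<Rightarrow> real" where
  "net_flow E x k = (\<Sum>e\<in>E. incidence k e * x e)"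

definition gradient_flow :: "(nat \<Rightarrow> nat \<Rightarrow> real) \<Rightarrow> nat \<Rightarrow> (nat \<Rightarrow> real) \<Rightarrow> nat \<times> nat \<Rightarrow> real" where
  "gradient_flow L n \<phi> e =
     (if e \<in> graph_edges L n then edge_weight L e * (\<phi> (fst e) - \<phi> (snd e)) else 0)"

definition laplacian :: "(nat \<Rightarrow> nat \<Rightarrow> real) \<Rightarrow> nat \<Rightarrow> (nat \<Rightarrow> real) \<Rightarrow> nat \<Rightarrow> real" where
  "laplacian L n \<phi> = net_flow (graph_edges L n) (gradient_flow L n \<phi>)"

definition dirichlet_energy :: "(nat \<Rightarrow> nat \<Rightarrow> real) \<Rightarrow> nat \<Rightarrow> (nat \<Rightarrow> real) \<Rightarrow> real" where
  "dirichlet_energy L n \<phi> =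
     (\<Sum>e\<in>graph_edges L n. edge_weight L e * (\<phi> (fst e) - \<phi> (snd e))\<^sup>2)"

lemma finite_graph_edges: "finite (graph_edges L n)"
proof (rule finite_subset)
  show "graph_edges L n \<subseteq> {..<n} \<times> {..<n}" by (auto simp: graph_edges_def)
qed auto

lemma graph_edges_bounds: "e \<in> graph_edges L n \<Longrightarrow> fst e < snd e \<and> snd e < n"
  by (auto simp: graph_edges_def)

lemma edge_weight_pos: "e \<in> graph_edges L n \<Longrightarrow> 0 < edge_weight L e"
  by (auto simp: graph_edges_def edge_weight_def)

lemma edge_cost_pos: "e \<in> graph_edges L n \<Longrightarrow> 0 < edge_cost L e"
  by (auto simp: graph_edges_def edge_cost_def divide_neg_neg)

lemma edge_cost_mult_gradient_flow:
  "e \<in> graph_edges L n \<Longrightarrow> edge_cost L e * gradient_flow L n \<phi> e = 2 * (\<phi> (fst e) - \<phi> (snd e))"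
  by (auto simp: graph_edges_def edge_cost_def gradient_flow_def edge_weight_def field_simps)

lemma sum_mult_incidence:
  assumes "a < n" "b < n" "a \<noteq> b"
  shows "(\<Sum>k<n. \<phi> k * incidence k (a, b)) = \<phi> a - \<phi> b"
proof -
  have "(\<Sum>k<n. \<phi> k * incidence k (a, b)) =
        (\<Sum>k<n. (if k = a then \<phi> k else 0) - (if k = b then \<phi> k else 0))"
    by (rule sum.cong) (auto simp: incidence_def assms)
  then show ?thesis
    using assms by (simp add: sum_subtractf)
qed

lemma sum_mult_net_flow:
  "(\<Sum>k<n. \<phi> k * net_flow (graph_edges L n) x k) =
   (\<Sum>e\<in>graph_edges L n. x e * (\<phi> (fst e) - \<phi> (snd e)))"
proof -
  have "(\<Sum>k<n. \<phi> k * net_flow (graph_edges L n) x k) =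
        (\<Sum>e\<in>graph_edges L n. x e * (\<Sum>k<n. \<phi> k * incidence k e))"
    unfolding net_flow_def sum_distrib_left
    by (subst sum.swap) (simp add: mult_ac)
  also have "\<dots> = (\<Sum>e\<in>graph_edges L n. x e * (\<phi> (fst e) - \<phi> (snd e)))"
  proof (rule sum.cong [OF refl])
    fix e assume "e \<in> graph_edges L n"
    then show "x e * (\<Sum>k<n. \<phi> k * incidence k e) = x e * (\<phi> (fst e) - \<phi> (snd e))"
      using graph_edges_bounds [of e L n] sum_mult_incidence [of "fst e" n "snd e" \<phi>] by simp
  qed
  finally show ?thesis .
qed

lemma sum_mult_laplacian:
  "(\<Sum>k<n. \<phi> k * laplacian L n \<psi> k) =
   (\<Sum>e\<in>graph_edges L n.
      edge_weight L e * (\<phi> (fst e) - \<phi> (snd e)) * (\<psi> (fst e) - \<psi> (snd e)))"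
  unfolding laplacian_def sum_mult_net_flow
  by (intro sum.cong refl) (simp add: gradient_flow_def)

lemma sum_mult_laplacian_commute:
  "(\<Sum>k<n. \<phi> k * laplacian L n \<psi> k) = (\<Sum>k<n. \<psi> k * laplacian L n \<phi> k)"
  unfolding sum_mult_laplacian by (intro sum.cong refl) simp

lemma dirichlet_energy_eq_sum_mult_laplacian:
  "dirichlet_energy L n \<phi> = (\<Sum>k<n. \<phi> k * laplacian L n \<phi> k)"
  unfolding sum_mult_laplacian dirichlet_energy_def by (simp add: power2_eq_square mult.assoc)

lemma dirichlet_energy_nonneg: "0 \<le> dirichlet_energy L n \<phi>"
  unfolding dirichlet_energy_def
  by (intro sum_nonneg mult_nonneg_nonneg less_imp_le [OF edge_weight_pos]) auto

lemma dirichlet_energy_add: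
  "dirichlet_energy L n (\<lambda>i. u i + d i) =
   dirichlet_energy L n u + dirichlet_energy L n d + 2 * (\<Sum>k<n. d k * laplacian L n u k)"
  unfolding sum_mult_laplacian dirichlet_energy_def sum_distrib_left sum.distrib [symmetric]
  by (intro sum.cong refl) (simp add: power2_eq_square algebra_simps)

lemma harm_obj_eq_dirichlet_energy:
  assumes offdiag: "\<forall>i j. i < n \<and> j < n \<and> i \<noteq> j \<longrightarrow> L i j \<le> 0"
  shows "harm_obj L n f = dirichlet_energy L n f"
proof -
  define s where "s i j = (f i - f j)\<^sup>2" for i j
  define t where "t i j = - L i j * s i j" for i j
  have "harm_obj L n f =
        (\<Sum>i<n. \<Sum>j<n. if i < j then t i j else 0) + (\<Sum>i<n. \<Sum>j<n. if j < i then t i j else 0)"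
    unfolding harm_obj_def sum.distrib [symmetric] by (intro sum.cong refl) (auto simp: t_def s_def)
  also have "(\<Sum>i<n. \<Sum>j<n. if j < i then t i j else 0) = (\<Sum>i<n. \<Sum>j<n. if i < j then t j i else 0)"
    by (rule sum.swap)
  also have "(\<Sum>i<n. \<Sum>j<n. if i < j then t i j else 0) + (\<Sum>i<n. \<Sum>j<n. if i < j then t j i else 0) =
             (\<Sum>i<n. \<Sum>j<n. if i < j then edge_weight L (i, j) * s i j else 0)"
    unfolding sum.distrib [symmetric]
    by (intro sum.cong refl) (simp add: t_def s_def edge_weight_def power2_commute algebra_simps)
  also have "\<dots> = (\<Sum>(i, j)\<in>{..<n} \<times> {..<n}. if i < j then edge_weight L (i, j) * s i j else 0)"
    by (rule sum.cartesian_product)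
  also have "\<dots> = dirichlet_energy L n f"
    unfolding dirichlet_energy_def
  proof (rule sum.mono_neutral_cong_right)
    show "\<forall>e\<in>{..<n} \<times> {..<n} - graph_edges L n.
            (case e of (i, j) \<Rightarrow> if i < j then edge_weight L (i, j) * s i j else 0) = 0"
    proof clarify
      fix i j assume "i < n" "j < n" "(i, j) \<notin> graph_edges L n"
      moreover have "i < j \<Longrightarrow> L i j \<le> 0 \<and> L j i \<le> 0"
        using offdiag \<open>i < n\<close> \<open>j < n\<close> by auto
      ultimately show "(if i < j then edge_weight L (i, j) * s i j else 0) = 0"
        by (auto simp: graph_edges_def edge_weight_def)
    qed
  qed (auto simp: graph_edges_def s_def)
  finally show ?thesis .
qed

lemma dirichlet_energy_eq_0_imp_const:
  assumes conn: "graph_connected L n" and energy: "dirichlet_energy L n d = 0"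
    and "i < n" "j < n"
  shows "d i = d j"
proof -
  have "\<forall>e\<in>graph_edges L n. edge_weight L e * (d (fst e) - d (snd e))\<^sup>2 = 0"
    using energy unfolding dirichlet_energy_def
    by (subst (asm) sum_nonneg_eq_0_iff)
       (auto simp: finite_graph_edges intro!: mult_nonneg_nonneg less_imp_le [OF edge_weight_pos])
  then have "d (fst e) = d (snd e)" if "e \<in> graph_edges L n" for e
    using that edge_weight_pos [OF that] by fastforce
  then have edge: "d a = d b" if "graph_adj L n a b" for a b
    using that unfolding graph_adj_def by (metis fst_conv snd_conv)
  have "(graph_adj L n)\<^sup>*\<^sup>* i j"
    using conn assms by (auto simp: graph_connected_def)
  then show ?thesis
    by (induction rule: rtranclp_induct) (auto dest: edge)
qed

lemma sum_labeled_unlabeled_eq_0: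
  fixes \<phi> g :: "nat \<Rightarrow> real"
  assumes "\<forall>i<nl. \<phi> i = 0" and "\<forall>k. nl \<le> k \<and> k < n \<longrightarrow> g k = 0"
  shows "(\<Sum>k<n. \<phi> k * g k) = 0"
proof (rule sum.neutral, intro ballI)
  fix k assume "k \<in> {..<n}"
  then show "\<phi> k * g k = 0"
    using assms by (cases "k < nl") auto
qed

lemma laplacian_boundary_problem_unique:
  assumes conn: "graph_connected L n" and "0 < nl"
    and labeled: "\<forall>i<nl. d i = 0"
    and unlabeled: "\<forall>k. nl \<le> k \<and> k < n \<longrightarrow> laplacian L n d k = 0"
    and "j < n"
  shows "d j = 0"
proof -
  have "dirichlet_energy L n d = 0"
    unfolding dirichlet_energy_eq_sum_mult_laplacian
    using sum_labeled_unlabeled_eq_0 [OF labeled unlabeled] .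
  then have "d j = d 0"
    using dirichlet_energy_eq_0_imp_const [OF conn _ \<open>j < n\<close>, of d 0] \<open>j < n\<close> by simp
  with labeled \<open>0 < nl\<close> show ?thesis by simp
qed

lemma laplacian_eq_sum_indicator:
  "laplacian L n \<phi> k = (\<Sum>j<n. \<phi> j * laplacian L n (indicator {j}) k)"
proof -
  have diff: "(\<Sum>j<n. \<phi> j * (indicator {j} (fst e) - indicator {j} (snd e))) = \<phi> (fst e) - \<phi> (snd e)"
    if "e \<in> graph_edges L n" for e
    using graph_edges_bounds [OF that]
    by (simp add: indicator_def right_diff_distrib sum_subtractf if_distrib [of "(*) _"] cong: if_cong)
  have "(\<Sum>j<n. \<phi> j * laplacian L n (indicator {j}) k) =
        (\<Sum>e\<in>graph_edges L n. incidence k e * edge_weight L e *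
           (\<Sum>j<n. \<phi> j * (indicator {j} (fst e) - indicator {j} (snd e))))"
    unfolding laplacian_def net_flow_def gradient_flow_def sum_distrib_left
    by (subst sum.swap) (intro sum.cong refl, simp add: mult_ac)
  also have "\<dots> = laplacian L n \<phi> k"
    unfolding laplacian_def net_flow_def gradient_flow_def
    by (intro sum.cong refl) (simp add: diff mult.assoc)
  finally show ?thesis by simp
qed

text \<open>The block \<open>\<Delta>\<^sub>u\<^sub>u\<close> of the Laplacian on the unlabeled nodes \<open>nl, \<dots>, n-1\<close>, reindexed from \<open>0\<close>.\<close>

definition unlabeled_laplacian_mat :: "(nat \<Rightarrow> nat \<Rightarrow> real) \<Rightarrow> nat \<Rightarrow> nat \<Rightarrow> real mat" where
  "unlabeled_laplacian_mat L n nl =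
     mat (n - nl) (n - nl) (\<lambda>(k, l). laplacian L n (indicator {nl + l}) (nl + k))"

lemma laplacian_block_decomposition:
  assumes v: "v \<in> carrier_vec (n - nl)" and k: "nl \<le> k" "k < n"
  shows "laplacian L n (\<lambda>i. if i < nl then g i else if i < n then v $ (i - nl) else 0) k =
         (\<Sum>j<nl. g j * laplacian L n (indicator {j}) k) + (unlabeled_laplacian_mat L n nl *\<^sub>v v) $ (k - nl)"
    (is "laplacian L n ?u k = _")
proof -
  have "laplacian L n ?u k =
        (\<Sum>j\<in>{0..<nl}. ?u j * laplacian L n (indicator {j}) k) +
        (\<Sum>j\<in>{nl..<n}. ?u j * laplacian L n (indicator {j}) k)"
    unfolding laplacian_eq_sum_indicator [of L n ?u] lessThan_atLeast0
    using k by (intro sum.atLeastLessThan_concat [symmetric]) auto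
  also have "(\<Sum>j\<in>{0..<nl}. ?u j * laplacian L n (indicator {j}) k) =
             (\<Sum>j<nl. g j * laplacian L n (indicator {j}) k)"
    by (simp add: lessThan_atLeast0)
  also have "(\<Sum>j\<in>{nl..<n}. ?u j * laplacian L n (indicator {j}) k) =
             (\<Sum>l<n - nl. v $ l * laplacian L n (indicator {nl + l}) k)"
    by (subst sum.atLeastLessThan_shift_0) (auto simp: lessThan_atLeast0 intro!: sum.cong)
  also have "\<dots> = (unlabeled_laplacian_mat L n nl *\<^sub>v v) $ (k - nl)"
    using v k by (simp add: unlabeled_laplacian_mat_def scalar_prod_def lessThan_atLeast0 mult.commute)
  finally show ?thesis by simp
qed

lemma mat_mult_vec_solvable_if_inj:
  fixes A :: "'a :: field mat"
  assumes A: "A \<in> carrier_mat m m"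
    and inj: "\<And>v. v \<in> carrier_vec m \<Longrightarrow> A *\<^sub>v v = 0\<^sub>v m \<Longrightarrow> v = 0\<^sub>v m"
    and b: "b \<in> carrier_vec m"
  shows "\<exists>x\<in>carrier_vec m. A *\<^sub>v x = b"
proof -
  have "det A \<noteq> 0"
    using det_0_iff_vec_prod_zero_field [OF A] inj by auto
  from det_non_zero_imp_unit [OF A this, of "()"]
  obtain B where B: "B \<in> carrier_mat m m" "A * B = 1\<^sub>m m"
    by (auto simp: ring_mat_def Units_def)
  have "A *\<^sub>v (B *\<^sub>v b) = (A * B) *\<^sub>v b"
    using A B b by (simp add: assoc_mult_mat_vec [symmetric])
  also have "\<dots> = b"
    using B b by simp
  finally show ?thesis using B b by (intro bexI [of _ "B *\<^sub>v b"]) auto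
qed

text \<open>Uniqueness makes \<open>\<Delta>\<^sub>u\<^sub>u\<close> injective, hence invertible.\<close>

lemma laplacian_boundary_problem_solvable:
  assumes conn: "graph_connected L n" and nl: "0 < nl" "nl \<le> n"
  shows "\<exists>u. (\<forall>i<nl. u i = g i) \<and> (\<forall>i. n \<le> i \<longrightarrow> u i = 0) \<and>
             (\<forall>k. nl \<le> k \<and> k < n \<longrightarrow> laplacian L n u k = h k)"
proof -
  let ?M = "unlabeled_laplacian_mat L n nl"
  define ext where "ext g' v i = (if i < nl then g' i else if i < n then v $ (i - nl) else 0)"
    for g' :: "nat \<Rightarrow> real" and v i
  have inj: "v = 0\<^sub>v (n - nl)" if v: "v \<in> carrier_vec (n - nl)" and Mv: "?M *\<^sub>v v = 0\<^sub>v (n - nl)" for v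
  proof (rule eq_vecI)
    fix i assume "i < dim_vec (0\<^sub>v (n - nl) :: real vec)"
    then have i: "i < n - nl" by simp
    have "ext (\<lambda>_. 0) v (nl + i) = 0"
    proof (rule laplacian_boundary_problem_unique [OF conn nl(1)])
      show "\<forall>k. nl \<le> k \<and> k < n \<longrightarrow> laplacian L n (ext (\<lambda>_. 0) v) k = 0"
      proof (intro allI impI)
        fix k assume k: "nl \<le> k \<and> k < n"
        then have "k - nl < n - nl" by linarith
        with k Mv show "laplacian L n (ext (\<lambda>_. 0) v) k = 0"
          using laplacian_block_decomposition [OF v] unfolding ext_def by simp
      qed
    qed (use i in \<open>auto simp: ext_def\<close>)
    moreover have "nl + i < n" using i by linarith
    ultimately show "v $ i = 0\<^sub>v (n - nl) $ i" using i by (simp add: ext_def)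
  qed (use v in simp)
  define b where "b = vec (n - nl) (\<lambda>k. h (nl + k) - (\<Sum>j<nl. g j * laplacian L n (indicator {j}) (nl + k)))"
  obtain v where v: "v \<in> carrier_vec (n - nl)" "?M *\<^sub>v v = b"
    using mat_mult_vec_solvable_if_inj [of ?M "n - nl" b] inj
    by (auto simp: unlabeled_laplacian_mat_def b_def)
  have "laplacian L n (ext g v) k = h k" if k: "nl \<le> k" "k < n" for k
  proof -
    have "k - nl < n - nl" using k by linarith
    then show ?thesis
      unfolding ext_def using laplacian_block_decomposition [OF v(1) k, of L g] k by (simp add: v(2) b_def)
  qed
  then show ?thesis
    using nl by (intro exI [of _ "ext g v"]) (auto simp: ext_def)
qed

lemma unique_minimiser_by_excess:
  fixes obj q :: "'a \<Rightarrow> real"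
  assumes "F x"
    and excess: "\<And>y. F y \<Longrightarrow> obj y = obj x + q y"
    and nonneg: "\<And>y. F y \<Longrightarrow> 0 \<le> q y"
    and definite: "\<And>y. F y \<Longrightarrow> q y = 0 \<Longrightarrow> y = x"
  shows "(F y \<and> (\<forall>z. F z \<longrightarrow> obj y \<le> obj z)) \<longleftrightarrow> y = x"
proof
  assume min: "F y \<and> (\<forall>z. F z \<longrightarrow> obj y \<le> obj z)"
  then have "F y" "obj y \<le> obj x"
    using \<open>F x\<close> by auto
  then have "q y = 0"
    using excess [OF \<open>F y\<close>] nonneg [OF \<open>F y\<close>] by linarith
  with \<open>F y\<close> show "y = x" by (rule definite)
next
  assume "y = x"
  moreover have "obj x \<le> obj z" if "F z" for z
    using excess [OF that] nonneg [OF that] by linarith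
  ultimately show "F y \<and> (\<forall>z. F z \<longrightarrow> obj y \<le> obj z)"
    using \<open>F x\<close> by blast
qed

lemma is_harmonic_min_iff:
  assumes offdiag: "\<forall>i j. i < n \<and> j < n \<and> i \<noteq> j \<longrightarrow> L i j \<le> 0"
    and conn: "graph_connected L n" and nl: "0 < nl"
    and labeled: "\<forall>i<nl. u i = fl i" and outside: "\<forall>i. n \<le> i \<longrightarrow> u i = 0"
    and harmonic: "\<forall>k. nl \<le> k \<and> k < n \<longrightarrow> laplacian L n u k = 0"
  shows "is_harmonic_min L n nl fl f \<longleftrightarrow> f = u"
  unfolding is_harmonic_min_def
proof (rule unique_minimiser_by_excess [where q = "\<lambda>g. dirichlet_energy L n (\<lambda>i. g i - u i)"])
  show "harm_feasible n nl fl u"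
    using labeled outside by (simp add: harm_feasible_def)
next
  fix g assume g: "harm_feasible n nl fl g"
  then have diff_labeled: "\<forall>i<nl. g i - u i = 0"
    using labeled by (simp add: harm_feasible_def)
  show "harm_obj L n g = harm_obj L n u + dirichlet_energy L n (\<lambda>i. g i - u i)"
    using dirichlet_energy_add [of L n u "\<lambda>i. g i - u i"]
      sum_labeled_unlabeled_eq_0 [OF diff_labeled harmonic]
    by (simp add: harm_obj_eq_dirichlet_energy [OF offdiag])
  show "0 \<le> dirichlet_energy L n (\<lambda>i. g i - u i)"
    by (rule dirichlet_energy_nonneg)
  assume energy0: "dirichlet_energy L n (\<lambda>i. g i - u i) = 0"
  have "g i - u i = 0" if "i < n" for i
    using dirichlet_energy_eq_0_imp_const [OF conn energy0 that, of 0] diff_labeled nl that by simp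
  show "g = u"
  proof
    fix i
    show "g i = u i"
      using g outside \<open>\<And>i. i < n \<Longrightarrow> g i - u i = 0\<close> [of i]
      by (cases "i < n") (auto simp: harm_feasible_def)
  qed
qed

text \<open>Since \<open>d\<^sub>e w\<^sub>e = 2\<close>, the cross term is \<open>2 \<mu>\<^sup>T A z\<close>, which vanishes because \<open>\<mu>\<close> is zero on
  labeled nodes and \<open>A z\<close> on unlabeled ones.\<close>

lemma flow_obj_gradient_flow_add:
  assumes labeled: "\<forall>i<nl. \<mu> i = 0"
    and conserved: "\<forall>k. nl \<le> k \<and> k < n \<longrightarrow> net_flow (graph_edges L n) z k = 0"
  shows "flow_obj (graph_edges L n) (edge_cost L) 0 (\<lambda>e. gradient_flow L n \<mu> e + z e) =
         flow_obj (graph_edges L n) (edge_cost L) 0 (gradient_flow L n \<mu>) +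
         (1/2) * (\<Sum>e\<in>graph_edges L n. edge_cost L e * (z e)\<^sup>2)"
proof -
  let ?E = "graph_edges L n" and ?x = "gradient_flow L n \<mu>"
  have "(\<Sum>e\<in>?E. edge_cost L e * ?x e * z e) = 2 * (\<Sum>k<n. \<mu> k * net_flow ?E z k)"
    unfolding sum_mult_net_flow sum_distrib_left
    by (intro sum.cong refl) (simp add: edge_cost_mult_gradient_flow)
  also have "\<dots> = 0"
    using sum_labeled_unlabeled_eq_0 [OF labeled conserved] by simp
  finally have cross: "(\<Sum>e\<in>?E. edge_cost L e * ?x e * z e) = 0" .
  have "flow_obj ?E (edge_cost L) 0 (\<lambda>e. ?x e + z e) =
        (1/2) * ((\<Sum>e\<in>?E. edge_cost L e * (?x e)\<^sup>2) + (\<Sum>e\<in>?E. edge_cost L e * (z e)\<^sup>2)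
                 + 2 * (\<Sum>e\<in>?E. edge_cost L e * ?x e * z e))"
    unfolding flow_obj_def sum_distrib_left sum.distrib [symmetric]
    by (intro arg_cong [where f = "(*) _"] sum.cong refl) (simp add: power2_eq_square algebra_simps)
  with cross show ?thesis
    by (simp add: flow_obj_def algebra_simps)
qed

lemma is_flow_min_iff:
  assumes labeled: "\<forall>i<nl. \<mu> i = 0"
    and unlabeled: "\<forall>k. nl \<le> k \<and> k < n \<longrightarrow> laplacian L n \<mu> k = (if k = p then -1 else 0)"
  shows "is_flow_min (graph_edges L n) (edge_cost L) 0 n nl p x \<longleftrightarrow> x = gradient_flow L n \<mu>"
  unfolding is_flow_min_def
proof (rule unique_minimiser_by_excess
    [where q = "\<lambda>y. (1/2) * (\<Sum>e\<in>graph_edges L n. edge_cost L e * (y e - gradient_flow L n \<mu> e)\<^sup>2)"])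
  let ?E = "graph_edges L n" and ?x = "gradient_flow L n \<mu>"
  show feasible: "flow_feasible ?E n nl p ?x"
    using unlabeled by (simp add: flow_feasible_def laplacian_def net_flow_def gradient_flow_def)
  fix y assume y: "flow_feasible ?E n nl p y"
  have "\<forall>k. nl \<le> k \<and> k < n \<longrightarrow> net_flow ?E (\<lambda>e. y e - ?x e) k = 0"
    using y feasible by (simp add: flow_feasible_def net_flow_def right_diff_distrib sum_subtractf)
  from flow_obj_gradient_flow_add [OF labeled this]
  show "flow_obj ?E (edge_cost L) 0 y =
      flow_obj ?E (edge_cost L) 0 ?x + (1/2) * (\<Sum>e\<in>?E. edge_cost L e * (y e - ?x e)\<^sup>2)"
    by simp
  show "0 \<le> (1/2) * (\<Sum>e\<in>?E. edge_cost L e * (y e - ?x e)\<^sup>2)"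
    by (intro mult_nonneg_nonneg sum_nonneg less_imp_le [OF edge_cost_pos]) auto
  assume "(1/2) * (\<Sum>e\<in>?E. edge_cost L e * (y e - ?x e)\<^sup>2) = 0"
  then have "(\<Sum>e\<in>?E. edge_cost L e * (y e - ?x e)\<^sup>2) = 0"
    by simp
  then have "\<forall>e\<in>?E. edge_cost L e * (y e - ?x e)\<^sup>2 = 0"
    by (subst (asm) sum_nonneg_eq_0_iff)
       (auto simp: finite_graph_edges intro!: mult_nonneg_nonneg less_imp_le [OF edge_cost_pos])
  show "y = ?x"
  proof
    fix e
    show "y e = ?x e"
    proof (cases "e \<in> ?E")
      case True
      with \<open>\<forall>e\<in>?E. edge_cost L e * (y e - ?x e)\<^sup>2 = 0\<close> show ?thesis
        using edge_cost_pos [OF True] by fastforce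
    next
      case False
      with y have "y e = 0" unfolding flow_feasible_def by blast
      with False show ?thesis by (simp add: gradient_flow_def)
    qed
  qed
qed

text \<open>Reciprocity: the symmetry of the Laplacian moves \<open>\<Delta>\<close> from \<open>u\<close> onto \<open>\<mu>\<close>.\<close>

lemma harmonic_value_eq_sum_labeled:
  assumes p: "nl \<le> p" "p < n"
    and harmonic: "\<forall>k. nl \<le> k \<and> k < n \<longrightarrow> laplacian L n u k = 0"
    and labeled: "\<forall>i<nl. \<mu> i = 0"
    and unlabeled: "\<forall>k. nl \<le> k \<and> k < n \<longrightarrow> laplacian L n \<mu> k = (if k = p then -1 else 0)"
  shows "u p = (\<Sum>j<nl. u j * laplacian L n \<mu> j)"
proof -
  have "0 = (\<Sum>k<n. \<mu> k * laplacian L n u k)"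
    using sum_labeled_unlabeled_eq_0 [OF labeled harmonic] by simp
  also have "\<dots> = (\<Sum>k<n. u k * laplacian L n \<mu> k)"
    by (rule sum_mult_laplacian_commute)
  also have "\<dots> = (\<Sum>j<nl. u j * laplacian L n \<mu> j) + (\<Sum>k\<in>{nl..<n}. u k * laplacian L n \<mu> k)"
    using p by (simp add: lessThan_atLeast0 sum.atLeastLessThan_concat)
  also have "(\<Sum>k\<in>{nl..<n}. u k * laplacian L n \<mu> k) = (\<Sum>k\<in>{nl..<n}. if k = p then - u k else 0)"
    using unlabeled by (intro sum.cong refl) auto
  also have "\<dots> = - u p"
    using p by simp
  finally show ?thesis by simp
qed

theorem mainTheorem2:
  fixes L :: "nat \<Rightarrow> nat \<Rightarrow> real" and n nl :: nat and fl :: "nat \<Rightarrow> real" and p :: nat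
  assumes offdiag: "\<forall>i j. i < n \<and> j < n \<and> i \<noteq> j \<longrightarrow> L i j \<le> 0"
    and conn: "graph_connected L n"
    and nl: "1 \<le> nl" "nl < n"
    and p: "nl \<le> p" "p < n"
  shows "(\<exists>!f. is_harmonic_min L n nl fl f)
       \<and> (\<exists>!x. is_flow_min (graph_edges L n) (edge_cost L) 0 n nl p x)
       \<and> flow_prediction (graph_edges L n) (edge_cost L) 0 n nl fl p = harmonic_solution L n nl fl p"
proof -
  have nl0: "0 < nl" and nln: "nl \<le> n" using nl by simp_all
  obtain u where u: "\<forall>i<nl. u i = fl i" "\<forall>i. n \<le> i \<longrightarrow> u i = 0"
    and harmonic: "\<forall>k. nl \<le> k \<and> k < n \<longrightarrow> laplacian L n u k = 0"
    using laplacian_boundary_problem_solvable [OF conn nl0 nln, of fl "\<lambda>_. 0"] by blast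
  obtain \<mu> where labeled: "\<forall>i<nl. \<mu> i = 0"
    and unlabeled: "\<forall>k. nl \<le> k \<and> k < n \<longrightarrow> laplacian L n \<mu> k = (if k = p then -1 else 0)"
    using laplacian_boundary_problem_solvable [OF conn nl0 nln, of "\<lambda>_. 0" "\<lambda>k. if k = p then -1 else 0"]
    by blast
  note harm_min = is_harmonic_min_iff [OF offdiag conn nl0 u harmonic]
  note flow_min = is_flow_min_iff [OF labeled unlabeled]
  have "harmonic_solution L n nl fl = u"
    unfolding harmonic_solution_def harm_min by simp
  moreover have "flow_solution (graph_edges L n) (edge_cost L) 0 n nl p = gradient_flow L n \<mu>"
    unfolding flow_solution_def flow_min by simp
  then have "flow_prediction (graph_edges L n) (edge_cost L) 0 n nl fl p =
             (\<Sum>j<nl. u j * laplacian L n \<mu> j)"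
    unfolding flow_prediction_def flow_weight_def laplacian_def net_flow_def
    using u by (simp add: mult.commute)
  ultimately show ?thesis
    using harm_min flow_min harmonic_value_eq_sum_labeled [OF p harmonic labeled unlabeled] by simp
qed

end
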